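(* For every $k\ge1$, $S^{(k)}_{-1}=0$ (and hence also the $\eta^{1}$-coefficient of $S^{(k)}_{\rm odd}$ vanishes).
   Context: Let $\eta$ be a large parameter, $c\neq0$. $(H_{\rm II})$: $\frac{d\lambda}{dt}=\eta\nu$, $\frac{d\nu}{dt}=\eta(2\lambda^3+t\lambda+c)$. Let $\lambda_0$ be a branch of $2\lambda_0^3+t\lambda_0+c=0$, $\Delta=6\lambda_0^2+t$, $\tau_1$ a zero of $\Delta$, $\phi_{\rm II}=\int_{\tau_1}^t\sqrt\Delta\,dt$. A 1-parameter solution of $(H_{\rm II})$ is a formal transseries $\lambda=\sum_{k\ge0}(\alpha\eta^{-1/2})^k\lambda^{(k)}(t,c,\eta)e^{k\eta\phi_{\rm II}}$, $\nu=\eta^{-1}\frac{d\lambda}{dt}=\sum_{k\ge0}(\alpha\eta^{-1/2})^k\nu^{(k)}e^{k\eta\phi_{\rm II}}$, with $\alpha$ a free parameter, $\lambda^{(k)},\nu^{(k)}$ formal power series in $\eta^{-1}$, $(\lambda^{(0)},\nu^{(0)})$ the 0-parameter solution (formal power series solution with leading terms $\lambda_0$, $0$), solving $(H_{\rm II})$ formally. Substitute it into $Q_{\rm II}=x^4+tx^2+2cx+2K_{\rm II}-\eta^{-1}\frac{\nu}{x-\lambda}+\eta^{-2}\frac{3}{4(x-\lambda)^2}$, $K_{\rm II}=\frac12[\nu^2-(\lambda^4+t\lambda^2+2c\lambda)]$, and $A_{\rm II}=\frac{1}{2(x-\lambda)}$, expanded as formal series $Q_{\rm II}=\sum_k(\alpha\eta^{-1/2})^kQ^{(k)}_{\rm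 II}e^{k\eta\phi_{\rm II}}$, $Q^{(k)}_{\rm II}=\sum_{\ell\ge0}\eta^{-\ell}Q^{(k)}_\ell(x,t,c)$ (similarly $A_{\rm II}$). The leading term is $Q_0=Q^{(0)}_0=(x-\lambda_0)^2(x^2+2\lambda_0x+3\lambda_0^2+t)$; let $S_{-1}=\sqrt{Q_0}$ with $S_{-1}\sim x^2$ at $\infty$. Let $S=\sum_{k\ge0}(\alpha\eta^{-1/2})^kS^{(k)}e^{k\eta\phi_{\rm II}}$, $S^{(k)}=\sum_{\ell\ge-1}\eta^{-\ell}S^{(k)}_\ell(x,t,c)$, be the formal solution of the Riccati equation $S^2+\partial_xS=\eta^2Q_{\rm II}$ with $S^{(0)}_{-1}=S_{-1}$, all coefficients being determined recursively by $2S_{-1}S^{(k)}_{\ell+1}+\sum_{k_1+k_2=k,\ell_1+\ell_2=\ell,0\le k_j<k\text{ or }\dots}S^{(k_1)}_{\ell_1}S^{(k_2)}_{\ell_2}+\partial_xS^{(k)}_\ell=Q^{(k)}_{\ell+2}$ (the sum over all pairs other than those involving $S_{-1}S^{(k)}_{\ell+1}$). $S^\dagger$ is the analogous solution with $S^{\dagger(0)}_{-1}=-S_{-1}$ and $S_{\rm odd}=\frac12(S-S^\dagger)$. One has the compatibility relation $\partial_tS=\partial_x(A_{\rm II}S-\frac12\partial_xA_{\rm II})$, which holds because $(\lambda,\nu)$ solves $(H_{\rm II})$. *)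

theory Defs
  imports "HOL-Analysis.Analysis" "HOL-Computational_Algebra.Formal_Power_Series"
begin

(* An element of complex fps fps encodes
     sum_{k,l} F_{k,l} (alpha eta^(-1/2) e^(eta phi))^k eta^(-l);
   outer index k = transseries grade, inner index l = power of eta^(-1).
   Multiplication of fps fps is exactly the formal product of such transseries
   (grades add), and inverse gives the formal inverse when the (0,0) coefficient
   is nonzero. *)

definition bser :: "(nat \<Rightarrow> nat \<Rightarrow> complex) \<Rightarrow> complex fps fps" where
  "bser f = Abs_fps (\<lambda>k. Abs_fps (\<lambda>l. f k l))"

definition bcoef :: "complex fps fps \<Rightarrow> nat \<Rightarrow> nat \<Rightarrow> complex" where
  "bcoef F k l = fps_nth (fps_nth F k) l"

definition bconst :: "complex \<Rightarrow> complex fps fps" where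
  "bconst z = fps_const (fps_const z)"

definition etainv :: "complex fps fps" where
  "etainv = fps_const fps_X"

(* Coefficients of eta^(-1) d/dt applied to sum_{k,l} f k l t (alpha eta^(-1/2))^k eta^(-l) e^(k eta phi):
   (eta^(-1) d/dt f)_{k,l} = d/dt f_{k,l-1} + k phi'(t) f_{k,l}. *)
definition edt :: "(complex \<Rightarrow> complex) \<Rightarrow> (nat \<Rightarrow> nat \<Rightarrow> complex \<Rightarrow> complex)
                    \<Rightarrow> nat \<Rightarrow> nat \<Rightarrow> complex \<Rightarrow> complex" where
  "edt phi f k l t = (if l = 0 then 0 else deriv (f k (l - 1)) t) + of_nat k * deriv phi t * f k l t"

(* lambda and nu = eta^(-1) d lambda/dt as bigraded series at the point t *)
definition LamS :: "(nat \<Rightarrow> nat \<Rightarrow> complex \<Rightarrow> complex) \<Rightarrow> complex \<Rightarrow> complex fps fps" where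
  "LamS lam t = bser (\<lambda>k l. lam k l t)"

definition NuS :: "(complex \<Rightarrow> complex) \<Rightarrow> (nat \<Rightarrow> nat \<Rightarrow> complex \<Rightarrow> complex) \<Rightarrow> complex \<Rightarrow> complex fps fps" where
  "NuS phi lam t = bser (\<lambda>k l. edt phi lam k l t)"

definition KS :: "complex \<Rightarrow> (complex \<Rightarrow> complex) \<Rightarrow> (nat \<Rightarrow> nat \<Rightarrow> complex \<Rightarrow> complex) \<Rightarrow> complex \<Rightarrow> complex fps fps" where
  "KS c phi lam t = bconst (1/2) * ((NuS phi lam t)^2
      - ((LamS lam t)^4 + bconst t * (LamS lam t)^2 + bconst (2*c) * LamS lam t))"

definition QS :: "complex \<Rightarrow> (complex \<Rightarrow> complex) \<Rightarrow> (nat \<Rightarrow> nat \<Rightarrow> complex \<Rightarrow> complex)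
                  \<Rightarrow> complex \<Rightarrow> complex \<Rightarrow> complex fps fps" where
  "QS c phi lam x t =
     bconst (x^4 + t*x^2 + 2*c*x) + 2 * KS c phi lam t
     - etainv * NuS phi lam t * inverse (bconst x - LamS lam t)
     + etainv^2 * bconst (3/4) * (inverse (bconst x - LamS lam t))^2"

(* 1-parameter solution of (H_II): lam k l t is the coefficient of eta^(-l) in lambda^(k)(t,c,eta),
   holomorphic on the t-domain U, with lambda^(0)_0 = lambda_0, and
   nu = eta^(-1) d lambda/dt,  eta^(-1) d nu/dt = 2 lambda^3 + t lambda + c  formally. *)
definition one_param_solution ::
  "complex \<Rightarrow> (complex \<Rightarrow> complex) \<Rightarrow> (complex \<Rightarrow> complex) \<Rightarrow> complex set
     \<Rightarrow> (nat \<Rightarrow> nat \<Rightarrow> complex \<Rightarrow> complex) \<Rightarrow> bool" where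
  "one_param_solution c lam0 phi U lam \<longleftrightarrow>
     (\<forall>k l. lam k l holomorphic_on U) \<and>
     (\<forall>t\<in>U. lam 0 0 t = lam0 t) \<and>
     (\<forall>k l. \<forall>t\<in>U. edt phi (edt phi lam) k l t
         = bcoef (2 * (LamS lam t)^3 + bconst t * LamS lam t + bconst c) k l)"

(* Formal Riccati equation S^2 + d/dx S = eta^2 Q_II, coefficientwise.
   S k m x t is S^(k)_(m-1)(x,t,c), i.e. S^(k) = sum_{m>=0} eta^(1-m) S k m. *)
definition riccati_sol ::
  "complex \<Rightarrow> (complex \<Rightarrow> complex) \<Rightarrow> (nat \<Rightarrow> nat \<Rightarrow> complex \<Rightarrow> complex)
     \<Rightarrow> complex set \<Rightarrow> (complex \<Rightarrow> complex set)
     \<Rightarrow> (nat \<Rightarrow> nat \<Rightarrow> complex \<Rightarrow> complex \<Rightarrow> complex) \<Rightarrow> bool" where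
  "riccati_sol c phi lam U X S \<longleftrightarrow>
     (\<forall>t\<in>U. \<forall>k m. (\<lambda>x. S k m x t) holomorphic_on X t) \<and>
     (\<forall>t\<in>U. \<forall>x\<in>X t. \<forall>k m.
        bcoef (bser (\<lambda>i j. S i j x t) * bser (\<lambda>i j. S i j x t)) k m
        + (if m = 0 then 0 else deriv (\<lambda>y. S k (m - 1) y t) x)
        = bcoef (QS c phi lam x t) k m)"

end

theory Submission
  imports Defs
begin

(* Keep only the leading power of eta in every transseries grade:
   the map lead : sum_{k,l} F_{k,l} w^k eta^(-l) \<mapsto> sum_k F_{k,0} w^k is a ring
   homomorphism from bigraded series to power series in the grade variable w,
   and it kills eta^(-1).  On the leading parts, eta^(-1) d/dt becomes
   phi'(t) \<theta> with the Euler operator \<theta> = w d/dw, so the leading part L of lambda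
   solves phi'^2 \<theta>^2 L = 2L^3 + tL + c.  This autonomous equation conserves the
   energy E = 1/2 ((phi' \<theta>L)^2 - (L^4 + tL^2 + 2cL)), which is exactly the leading
   part of K_II; hence lead K_II, and with it lead Q_II, is a constant series.
   The Riccati equation at order eta^2 reads (lead S)^2 = lead Q_II, and a power
   series whose square is constant and whose constant term is nonzero is itself
   constant.  So S^(k)_(-1) = 0 for k \<ge> 1, for S and S^\<dagger> alike, and therefore
   also for S_odd = (S - S^\<dagger>)/2. *)

(* Square roots of constants with nonzero constant term are constant: with
   C the constant term of s, (s - C)(s + C) = 0 and s + C has constant term 2C \<noteq> 0. *)
lemma fps_square_const_imp_const:
  fixes s :: "'a :: {idom, ring_char_0} fps"
  assumes sq: "s^2 = fps_const z" and nz: "fps_nth s 0 \<noteq> 0"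
  shows "s = fps_const (fps_nth s 0)"
proof -
  define C where "C = fps_const (fps_nth s 0)"
  have "z = fps_nth s 0 ^ 2"
    using arg_cong[OF sq, of "\<lambda>f. fps_nth f 0"] by (simp add: power2_eq_square)
  hence "s^2 = C^2" by (simp add: sq C_def fps_const_power)
  hence "(s + C) * (s - C) = 0" by (simp add: power2_eq_square square_diff_square_factored[symmetric])
  moreover have "s + C \<noteq> 0"
  proof
    assume "s + C = 0"
    then have "fps_nth (s + C) 0 = 0" by simp
    then have "fps_nth s 0 + fps_nth s 0 = 0"
      by (simp only: C_def fps_add_nth fps_nth_fps_const simp_thms if_True)
    then have "2 * fps_nth s 0 = 0" by (metis mult_2)
    with nz show False by simp
  qed
  ultimately show ?thesis by (simp add: C_def)
qed

(* The Euler operator w d/dw: it multiplies the coefficient of w^k by k and is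
   the leading-order shadow of eta^(-1) d/dt acting on grade-k terms e^(k eta phi). *)
definition euler :: "'a :: comm_ring_1 fps \<Rightarrow> 'a fps" where
  "euler f = fps_X * fps_deriv f"

lemma euler_nth: "fps_nth (euler f) k = of_nat k * fps_nth f k"
  by (cases k) (simp_all add: euler_def)

(* Energy of the equation a^2 \<theta>^2 L = 2L^3 + tL + c, with velocity a \<theta>L. *)
definition energy :: "'a :: field \<Rightarrow> 'a \<Rightarrow> 'a \<Rightarrow> 'a fps \<Rightarrow> 'a fps" where
  "energy a t c L = fps_const (1/2) * ((fps_const a * euler L)^2
      - (L^4 + fps_const t * L^2 + fps_const (2*c) * L))"

(* Along solutions the energy is a first integral: its derivative equals
   L' (a^2 \<theta>^2 L - (2L^3 + tL + c)) = 0. *)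
lemma energy_conserved:
  fixes L :: "'a :: field_char_0 fps"
  assumes ode: "fps_const (a^2) * euler (euler L) = 2 * L^3 + fps_const t * L + fps_const c"
  shows "energy a t c L = fps_const (fps_nth (energy a t c L) 0)"
proof -
  define D where "D = fps_deriv L"
  define M' where "M' = fps_deriv (euler L)"
  have half: "fps_const (1/2) * (2 :: 'a fps) = 1"
    by (simp add: fps_numeral_fps_const flip: fps_const_mult)
  have ring_identity: "h * (2 * (A * (fps_X * D)) * (A * M')
        - (4 * L^3 * D + T * (2 * L * D) + (2 * C) * D))
      = D * (A * A * (fps_X * M') - (2 * L^3 + T * L + C))"
    if "h * 2 = 1" for h A T C :: "'a fps" using that by algebra
  have "fps_deriv ((fps_const a * euler L)^2) = 2 * (fps_const a * euler L) * (fps_const a * M')"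
    by (simp add: fps_deriv_power M'_def)
  moreover have "fps_deriv (L^4) = 4 * L^3 * D" "fps_deriv (L^2) = 2 * L * D"
    by (simp_all add: fps_deriv_power D_def)
  ultimately have "fps_deriv (energy a t c L)
      = fps_const (1/2) * (2 * (fps_const a * (fps_X * D)) * (fps_const a * M')
         - (4 * L^3 * D + fps_const t * (2 * L * D) + fps_const (2*c) * D))"
    unfolding energy_def
    by (simp only: fps_deriv_mult_const_left fps_deriv_sub fps_deriv_add D_def euler_def)
  also have "\<dots> = D * (fps_const (a^2) * euler (euler L) - (2 * L^3 + fps_const t * L + fps_const c))"
    using ring_identity[OF half]
    by (simp add: euler_def M'_def power2_eq_square fps_numeral_fps_const flip: fps_const_mult)
  also have "\<dots> = 0" using ode by simp
  finally show ?thesis using fps_deriv_eq_0_iff by blast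
qed

definition lead :: "'a :: comm_ring_1 fps fps \<Rightarrow> 'a fps" where
  "lead F = Abs_fps (\<lambda>k. fps_nth (fps_nth F k) 0)"

lemma lead_nth: "fps_nth (lead F) k = bcoef F k 0"
  by (simp add: lead_def bcoef_def)

lemma lead_mult [simp]: "lead (F * G) = lead F * lead G"
  by (rule fps_ext) (simp add: lead_def fps_mult_nth fps_sum_nth)

lemma lead_add [simp]: "lead (F + G) = lead F + lead G"
  by (rule fps_ext) (simp add: lead_def)

lemma lead_diff [simp]: "lead (F - G) = lead F - lead G"
  by (rule fps_ext) (simp add: lead_def)

lemma lead_one [simp]: "lead 1 = 1"
  by (rule fps_ext) (simp add: lead_def)

lemma lead_power [simp]: "lead (F ^ n) = lead F ^ n"
  by (induct n) simp_all

lemma lead_two [simp]: "lead 2 = 2"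
  by (rule fps_ext) (simp add: lead_def fps_numeral_nth)

lemma lead_const [simp]:
  "lead (bconst z) = fps_const z" "lead etainv = 0" "lead (bser f) = Abs_fps (\<lambda>k. f k 0)"
  by (rule fps_ext, simp add: lead_def bconst_def etainv_def bser_def)+

context
  fixes c :: complex and phi :: "complex \<Rightarrow> complex"
    and lam :: "nat \<Rightarrow> nat \<Rightarrow> complex \<Rightarrow> complex" and t :: complex
begin

definition lead_lambda :: "complex fps" where
  "lead_lambda = Abs_fps (\<lambda>k. lam k 0 t)"

lemma lead_NuS: "lead (NuS phi lam t) = fps_const (deriv phi t) * euler lead_lambda"
  by (rule fps_ext) (simp add: NuS_def lead_lambda_def edt_def euler_nth)

lemma lead_KS: "lead (KS c phi lam t) = energy (deriv phi t) t c lead_lambda"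
  by (simp add: KS_def energy_def lead_NuS LamS_def flip: lead_lambda_def)

lemma lead_QS: "lead (QS c phi lam x t) = fps_const (x^4 + t*x^2 + 2*c*x) + 2 * lead (KS c phi lam t)"
  by (simp add: QS_def)

lemma lead_equation:
  assumes "one_param_solution c lam0 phi U lam" and "t \<in> U"
  shows "fps_const ((deriv phi t)^2) * euler (euler lead_lambda)
       = 2 * lead_lambda^3 + fps_const t * lead_lambda + fps_const c"
proof (rule fps_ext)
  fix n
  have "edt phi (edt phi lam) n 0 t
      = bcoef (2 * (LamS lam t)^3 + bconst t * LamS lam t + bconst c) n 0"
    using assms unfolding one_param_solution_def by blast
  also have "\<dots> = fps_nth (2 * lead_lambda^3 + fps_const t * lead_lambda + fps_const c) n"
    by (simp add: lead_nth[symmetric] LamS_def flip: lead_lambda_def)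
  finally show "fps_nth (fps_const ((deriv phi t)^2) * euler (euler lead_lambda)) n
      = fps_nth (2 * lead_lambda^3 + fps_const t * lead_lambda + fps_const c) n"
    by (simp add: euler_nth edt_def lead_lambda_def power2_eq_square algebra_simps)
qed

lemma lead_QS_const:
  assumes "one_param_solution c lam0 phi U lam" and "t \<in> U"
  shows "\<exists>z. lead (QS c phi lam x t) = fps_const z"
proof -
  define e where "e = fps_nth (energy (deriv phi t) t c lead_lambda) 0"
  have "lead (QS c phi lam x t) = fps_const (x^4 + t*x^2 + 2*c*x) + 2 * fps_const e"
    using energy_conserved[OF lead_equation[OF assms]] by (simp add: lead_QS lead_KS e_def)
  also have "\<dots> = fps_const (x^4 + t*x^2 + 2*c*x + 2*e)"
    by (simp add: fps_numeral_fps_const flip: fps_const_mult fps_const_add)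
  finally show ?thesis ..
qed

end

(* The eta^2 part of S^2 + dS/dx = eta^2 Q_II, i.e. S_(-1)^2 = lead Q_II gradewise. *)
lemma riccati_lead:
  assumes "riccati_sol c phi lam U X S" and "t \<in> U" and "x \<in> X t"
  shows "(Abs_fps (\<lambda>k. S k 0 x t))^2 = lead (QS c phi lam x t)"
proof (rule fps_ext)
  fix k
  have riccati: "\<forall>k m. bcoef (bser (\<lambda>i j. S i j x t) * bser (\<lambda>i j. S i j x t)) k m
      + (if m = 0 then 0 else deriv (\<lambda>y. S k (m - 1) y t) x) = bcoef (QS c phi lam x t) k m"
    using assms unfolding riccati_sol_def by blast
  have "bcoef (bser (\<lambda>i j. S i j x t) * bser (\<lambda>i j. S i j x t)) k 0
      = bcoef (QS c phi lam x t) k 0"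
    using spec[OF spec[OF riccati, of k], of 0] by simp
  then show "fps_nth ((Abs_fps (\<lambda>k. S k 0 x t))^2) k = fps_nth (lead (QS c phi lam x t)) k"
    by (simp add: lead_nth[symmetric] power2_eq_square)
qed

lemma riccati_higher_leading_vanish:
  assumes "one_param_solution c lam0 phi U lam" and "riccati_sol c phi lam U X S"
    and "t \<in> U" and "x \<in> X t" and "S 0 0 x t \<noteq> 0" and "k \<ge> 1"
  shows "S k 0 x t = 0"
proof -
  obtain z where "(Abs_fps (\<lambda>k. S k 0 x t))^2 = fps_const z"
    using lead_QS_const[OF assms(1,3)] riccati_lead[OF assms(2-4)] by metis
  then have "Abs_fps (\<lambda>k. S k 0 x t) = fps_const (S 0 0 x t)"
    using fps_square_const_imp_const assms(5) by fastforce
  then have "fps_nth (Abs_fps (\<lambda>k. S k 0 x t)) k = fps_nth (fps_const (S 0 0 x t)) k"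
    by (rule arg_cong)
  then show ?thesis using assms(6) by simp
qed

(* Apply the main step to S and to S^\<dagger> (whose S^(0)_(-1) = -S_(-1) is also nonzero);
   the eta^1 coefficient of S_odd = (S - S^\<dagger>)/2 then vanishes as well. *)
theorem mainTheorem9:
  fixes c :: complex
    and lam0 phi :: "complex \<Rightarrow> complex"
    and U :: "complex set"
    and X :: "complex \<Rightarrow> complex set"
    and lam :: "nat \<Rightarrow> nat \<Rightarrow> complex \<Rightarrow> complex"
    and S Sd :: "nat \<Rightarrow> nat \<Rightarrow> complex \<Rightarrow> complex \<Rightarrow> complex"
  assumes "c \<noteq> 0"
    and "open U"
    and "lam0 holomorphic_on U"
    and "\<forall>t\<in>U. 2 * (lam0 t)^3 + t * lam0 t + c = 0"
    and "phi holomorphic_on U"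
    and "\<forall>t\<in>U. (deriv phi t)^2 = 6 * (lam0 t)^2 + t"
    and "one_param_solution c lam0 phi U lam"
    and "\<forall>t\<in>U. open (X t)"
    and "riccati_sol c phi lam U X S"
    and "riccati_sol c phi lam U X Sd"
    and "\<forall>t\<in>U. \<forall>x\<in>X t. S 0 0 x t \<noteq> 0 \<and> Sd 0 0 x t = - S 0 0 x t"
  shows "\<forall>t\<in>U. \<forall>x\<in>X t. \<forall>k\<ge>1.
           S k 0 x t = 0 \<and> Sd k 0 x t = 0 \<and> (S k 0 x t - Sd k 0 x t) / 2 = 0"
proof (intro ballI allI impI)
  fix t x and k :: nat assume t: "t \<in> U" and x: "x \<in> X t" and k: "k \<ge> 1"
  have S0: "S 0 0 x t \<noteq> 0" and Sd0: "Sd 0 0 x t \<noteq> 0" using assms(11) t x by auto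
  have "S k 0 x t = 0"
    using riccati_higher_leading_vanish[OF assms(7,9) t x S0 k] .
  moreover have "Sd k 0 x t = 0"
    using riccati_higher_leading_vanish[OF assms(7,10) t x Sd0 k] .
  ultimately show "S k 0 x t = 0 \<and> Sd k 0 x t = 0 \<and> (S k 0 x t - Sd k 0 x t) / 2 = 0"
    by simp
qed

end
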